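(* Let $E$ be a real Banach space, $K\subset E$ nonempty closed convex, $g\in\mathcal F$ totally convex on $E$ satisfying H1–H2, $Y$ a real Banach space containing a closed, convex, pointed cone $C$ with nonempty interior, $f:E\times E\to Y$ and $T:K\to\mathcal P(K)$. Assume B1–B4. Then $DS(f,T)$ is closed and convex.
   Context: $\mathcal F$: functions $g:E\to\mathbb R$ strictly convex, lower semicontinuous, Gâteaux differentiable (derivative $g'$). $D_g(x,y)=g(x)-g(y)-\langle x-y,g'(y)\rangle$; $v_g(x,t)=\inf\{D_g(y,x):\|y-x\|=t\}$; totally convex: $v_g(x,t)>0$ for all $x$, $t>0$. H1: level sets of $D_g(x,\cdot)$ bounded for all $x$; H2: $\inf_{x\in A}v_g(x,t)>0$ for all $t>0$ and bounded $A$. $\Pi^g_D(x)$ = unique minimizer of $D_g(\cdot,x)$ over nonempty closed convex $D$. $\mathrm{Fix}(T)=\{x\in K:x\in T(x)\}$. $T$ quasi $D_g$-nonexpansive: $S(x):=\Pi^g_{T(x)}(x)$ has $\mathrm{Fix}(S)\ne\emptyset$ and $D_g(p,S(x))\le D_g(p,x)$ for $p\in\mathrm{Fix}(S)$, $x\in K$. Demiclosed: $x^k\rightharpoonup\bar x$, $d(x^k,T(x^k))\to0$ imply $\bar x\in\mathrm{Fix}(T)$. Lower semicontinuous at $\bar x$: $x^k\to\bar x$ in $K$, $\bar y\in T(\bar x)$ imply existence of $y^k\in T(x^k)$ with $y^k\to\bar y$. $y\preceq y'$ iff $y'-y\in C$; $C$-convex: $G(tx+(1-t)y)\preceq tG(x)+(1-t)G(y)$.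 B1: $f(x,x)=0$ for all $x$. B2: $f$ uniformly continuous on bounded subsets of $E\times E$. B3: $f(x,\cdot)$ is $C$-convex for all $x$. B4: $T$ has nonempty closed convex values, is demiclosed, lower semicontinuous at each point of $K$, and quasi $D_g$-nonexpansive. $DS(f,T)=\{x\in K:x\in T(x),\ f(y,x)\in-C\ \forall y\in K\}$. *)

theory Defs
  imports "HOL-Analysis.Analysis"
begin

definition strictly_convex :: "('a::real_vector \<Rightarrow> real) \<Rightarrow> bool" where
  "strictly_convex g \<longleftrightarrow> (\<forall>x y t. x \<noteq> y \<and> 0 < t \<and> t < 1 \<longrightarrow>
      g (t *\<^sub>R x + (1 - t) *\<^sub>R y) < t * g x + (1 - t) * g y)"

definition lsc :: "('a::topological_space \<Rightarrow> real) \<Rightarrow> bool" where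
  "lsc g \<longleftrightarrow> (\<forall>x. \<forall>e>0. \<forall>\<^sub>F y in at x. g x - e < g y)"

definition gateaux_deriv :: "('a::real_normed_vector \<Rightarrow> real) \<Rightarrow> ('a \<Rightarrow> 'a \<Rightarrow> real) \<Rightarrow> bool" where
  "gateaux_deriv g g' \<longleftrightarrow> (\<forall>y. bounded_linear (g' y) \<and>
      (\<forall>h. ((\<lambda>t. g (y + t *\<^sub>R h)) has_real_derivative g' y h) (at 0)))"

definition class_F :: "('a::real_normed_vector \<Rightarrow> real) \<Rightarrow> ('a \<Rightarrow> 'a \<Rightarrow> real) \<Rightarrow> bool" where
  "class_F g g' \<longleftrightarrow> strictly_convex g \<and> lsc g \<and> gateaux_deriv g g'"

definition bregman :: "('a::real_normed_vector \<Rightarrow> real) \<Rightarrow> ('a \<Rightarrow> 'a \<Rightarrow> real) \<Rightarrow> 'a \<Rightarrow> 'a \<Rightarrow> real" where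
  "bregman g g' x y = g x - g y - g' y (x - y)"

(* modulus of total convexity v_g(x,t) = inf { D_g(y,x) : ||y - x|| = t } (inf {} = +\<infinity>) *)
definition mod_tc :: "('a::real_normed_vector \<Rightarrow> real) \<Rightarrow> ('a \<Rightarrow> 'a \<Rightarrow> real) \<Rightarrow> 'a \<Rightarrow> real \<Rightarrow> ereal" where
  "mod_tc g g' x t = (INF y \<in> {y. norm (y - x) = t}. ereal (bregman g g' y x))"

definition totally_convex :: "('a::real_normed_vector \<Rightarrow> real) \<Rightarrow> ('a \<Rightarrow> 'a \<Rightarrow> real) \<Rightarrow> bool" where
  "totally_convex g g' \<longleftrightarrow> (\<forall>x. \<forall>t>0. mod_tc g g' x t > 0)"

definition H1 :: "('a::real_normed_vector \<Rightarrow> real) \<Rightarrow> ('a \<Rightarrow> 'a \<Rightarrow> real) \<Rightarrow> bool" where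
  "H1 g g' \<longleftrightarrow> (\<forall>x r. bounded {y. bregman g g' x y \<le> r})"

definition H2 :: "('a::real_normed_vector \<Rightarrow> real) \<Rightarrow> ('a \<Rightarrow> 'a \<Rightarrow> real) \<Rightarrow> bool" where
  "H2 g g' \<longleftrightarrow> (\<forall>A t. bounded A \<and> t > 0 \<longrightarrow> (INF x \<in> A. mod_tc g g' x t) > 0)"

definition bproj :: "('a::real_normed_vector \<Rightarrow> real) \<Rightarrow> ('a \<Rightarrow> 'a \<Rightarrow> real) \<Rightarrow> 'a set \<Rightarrow> 'a \<Rightarrow> 'a" where
  "bproj g g' D x = (THE z. z \<in> D \<and> (\<forall>y\<in>D. bregman g g' z x \<le> bregman g g' y x))"

definition Fix :: "'a set \<Rightarrow> ('a \<Rightarrow> 'a set) \<Rightarrow> 'a set" where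
  "Fix K T = {x \<in> K. x \<in> T x}"

definition quasi_Dg_nonexp ::
  "('a::real_normed_vector \<Rightarrow> real) \<Rightarrow> ('a \<Rightarrow> 'a \<Rightarrow> real) \<Rightarrow> 'a set \<Rightarrow> ('a \<Rightarrow> 'a set) \<Rightarrow> bool" where
  "quasi_Dg_nonexp g g' K T \<longleftrightarrow>
     (let S = (\<lambda>x. bproj g g' (T x) x); FS = {x \<in> K. S x = x} in
       FS \<noteq> {} \<and> (\<forall>p\<in>FS. \<forall>x\<in>K. bregman g g' p (S x) \<le> bregman g g' p x))"

definition weak_conv :: "(nat \<Rightarrow> 'a::real_normed_vector) \<Rightarrow> 'a \<Rightarrow> bool" where
  "weak_conv xs x \<longleftrightarrow> (\<forall>\<phi>::'a \<Rightarrow> real. bounded_linear \<phi> \<longrightarrow> (\<lambda>k. \<phi> (xs k)) \<longlonglongrightarrow> \<phi> x)"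

definition demiclosed :: "'a::real_normed_vector set \<Rightarrow> ('a \<Rightarrow> 'a set) \<Rightarrow> bool" where
  "demiclosed K T \<longleftrightarrow> (\<forall>xs x. (\<forall>k. xs k \<in> K) \<and> weak_conv xs x \<and>
       (\<lambda>k. infdist (xs k) (T (xs k))) \<longlonglongrightarrow> 0 \<longrightarrow> x \<in> Fix K T)"

definition lsc_map_at :: "'a::metric_space set \<Rightarrow> ('a \<Rightarrow> 'a set) \<Rightarrow> 'a \<Rightarrow> bool" where
  "lsc_map_at K T x \<longleftrightarrow> (\<forall>xs y. (\<forall>k. xs k \<in> K) \<and> xs \<longlonglongrightarrow> x \<and> y \<in> T x \<longrightarrow>
       (\<exists>ys. (\<forall>k. ys k \<in> T (xs k)) \<and> ys \<longlonglongrightarrow> y))"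

(* C-convexity of G : E -> Y w.r.t. the order y \<preceq> y' iff y' - y \<in> C *)
definition C_convex :: "'b::real_vector set \<Rightarrow> ('a::real_vector \<Rightarrow> 'b) \<Rightarrow> bool" where
  "C_convex C G \<longleftrightarrow> (\<forall>x y t. 0 \<le> t \<and> t \<le> 1 \<longrightarrow>
      (t *\<^sub>R G x + (1 - t) *\<^sub>R G y) - G (t *\<^sub>R x + (1 - t) *\<^sub>R y) \<in> C)"

definition DS :: "'a set \<Rightarrow> 'b::real_vector set \<Rightarrow> ('a \<Rightarrow> 'a \<Rightarrow> 'b) \<Rightarrow> ('a \<Rightarrow> 'a set) \<Rightarrow> 'a set" where
  "DS K C f T = {x \<in> K. x \<in> T x \<and> (\<forall>y\<in>K. f y x \<in> uminus ` C)}"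

end

theory Submission
  imports Defs
begin

(* DS(f,T) is the intersection of Fix T with the set of x in K such that f(y,x) lies in -C for all
   y in K. The latter set is closed because each f(y,.) is continuous, and convex because each
   f(y,.) is C-convex and C is a convex cone. Fix T is closed because T is demiclosed. For its
   convexity, let z = t p + (1-t) q with p, q fixed points and put y = S z, the Bregman projection
   of z onto T z. The identity
     t D(p,y) + (1-t) D(q,y) - D(z,y) = t D(p,z) + (1-t) D(q,z)
   together with D(p,y) <= D(p,z) and D(q,y) <= D(q,z) (quasi D_g-nonexpansiveness) forces
   D(z,y) <= 0, hence z = y, which lies in T z. Since E need not be reflexive, existence of the
   Bregman projection is the real work: by H2, a minimizing sequence of D(.,x) over a closed convex
   set is Cauchy, and its limit is a minimizer by lower semicontinuity of g. *)

lemma class_F_bounded_linear: "class_F g g' \<Longrightarrow> bounded_linear (g' y)"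
  by (simp add: class_F_def gateaux_deriv_def)

lemma class_F_strict_convex:
  "class_F g g' \<Longrightarrow> x \<noteq> y \<Longrightarrow> 0 < t \<Longrightarrow> t < 1 \<Longrightarrow>
    g (t *\<^sub>R x + (1 - t) *\<^sub>R y) < t * g x + (1 - t) * g y"
  by (simp add: class_F_def strictly_convex_def)

lemma class_F_convex_on:
  assumes "class_F g g'"
  shows "convex_on UNIV g"
proof (rule convex_onI)
  fix t :: real and x y
  assume t: "0 < t" "t < 1"
  show "g ((1 - t) *\<^sub>R x + t *\<^sub>R y) \<le> (1 - t) * g x + t * g y"
  proof (cases "x = y")
    case True
    then show ?thesis by (simp add: algebra_simps)
  next
    case False
    then show ?thesis using class_F_strict_convex[OF assms False, of "1 - t"] t by simp
  qed
qed simp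

lemma bregman_self: "class_F g g' \<Longrightarrow> bregman g g' x x = 0"
  by (simp add: bregman_def linear_simps(3) class_F_bounded_linear)

lemma bregman_convex_combination:
  assumes "class_F g g'"
  shows "t * bregman g g' p y + (1 - t) * bregman g g' q y
    = t * g p + (1 - t) * g q - g (t *\<^sub>R p + (1 - t) *\<^sub>R q) + bregman g g' (t *\<^sub>R p + (1 - t) *\<^sub>R q) y"
proof -
  interpret L: bounded_linear "g' y" by (rule class_F_bounded_linear[OF assms])
  have "g' y (t *\<^sub>R p + (1 - t) *\<^sub>R q - y) = g' y (t *\<^sub>R (p - y) + (1 - t) *\<^sub>R (q - y))"
    by (simp add: algebra_simps)
  also have "\<dots> = t * g' y (p - y) + (1 - t) * g' y (q - y)"
    by (simp add: L.add L.scale)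
  finally show ?thesis by (simp add: bregman_def algebra_simps)
qed

lemma bregman_convex_combination_diff:
  assumes "class_F g g'" and z: "z = t *\<^sub>R p + (1 - t) *\<^sub>R q"
  shows "t * bregman g g' p y + (1 - t) * bregman g g' q y - bregman g g' z y
    = t * bregman g g' p z + (1 - t) * bregman g g' q z"
  using bregman_convex_combination[OF assms(1), of t p y q] bregman_convex_combination[OF assms(1), of t p z q]
    bregman_self[OF assms(1), of z] z by simp

lemma bregman_convex_left:
  assumes "class_F g g'" "0 \<le> t" "t \<le> 1"
  shows "bregman g g' (t *\<^sub>R p + (1 - t) *\<^sub>R q) y \<le> t * bregman g g' p y + (1 - t) * bregman g g' q y"
proof -
  have "g (t *\<^sub>R p + (1 - t) *\<^sub>R q) \<le> t * g p + (1 - t) * g q"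
    using class_F_convex_on[OF assms(1)] assms(2,3) unfolding convex_on_def by simp
  then show ?thesis using bregman_convex_combination[OF assms(1), of t p y q] by linarith
qed

lemma bregman_nonneg:
  assumes "class_F g g'"
  shows "0 \<le> bregman g g' x y"
proof -
  define \<phi> where "\<phi> s = g (y + s *\<^sub>R (x - y))" for s
  have "convex_on UNIV \<phi>"
  proof (rule convex_onI)
    fix t a b :: real
    assume "0 < t" "t < 1"
    moreover have "y + ((1 - t) * a + t * b) *\<^sub>R (x - y)
        = (1 - t) *\<^sub>R (y + a *\<^sub>R (x - y)) + t *\<^sub>R (y + b *\<^sub>R (x - y))"
      by (simp add: algebra_simps)
    ultimately show "\<phi> ((1 - t) *\<^sub>R a + t *\<^sub>R b) \<le> (1 - t) * \<phi> a + t * \<phi> b"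
      using convex_onD[OF class_F_convex_on[OF assms]] by (simp add: \<phi>_def)
  qed simp
  moreover have "(\<phi> has_real_derivative g' y (x - y)) (at 0)"
    using assms unfolding class_F_def gateaux_deriv_def \<phi>_def by blast
  ultimately have "\<phi> 1 - \<phi> 0 \<ge> g' y (x - y) * (1 - 0)"
    by (intro convex_on_imp_above_tangent[where A = UNIV]) auto
  then show ?thesis by (simp add: \<phi>_def bregman_def)
qed

lemma bregman_pos:
  assumes "class_F g g'" "x \<noteq> y"
  shows "0 < bregman g g' x y"
proof -
  have "g ((1/2) *\<^sub>R x + (1 - 1/2) *\<^sub>R y) < (1/2) * g x + (1 - 1/2) * g y"
    by (rule class_F_strict_convex[OF assms]) auto
  then show ?thesis
    using bregman_convex_combination[OF assms(1), of "1/2" x y y] bregman_self[OF assms(1), of y]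
      bregman_nonneg[OF assms(1), of "(1/2) *\<^sub>R x + (1 - 1/2) *\<^sub>R y" y] by simp
qed

lemma bregman_le_0_imp_eq: "class_F g g' \<Longrightarrow> bregman g g' x y \<le> 0 \<Longrightarrow> x = y"
  using bregman_pos by force

lemma mod_tc_le_bregman: "norm (u - w) = t \<Longrightarrow> mod_tc g g' w t \<le> ereal (bregman g g' u w)"
  unfolding mod_tc_def by (rule INF_lower) simp

(* Shrinking a towards w onto the sphere of radius t and using convexity of D(.,w): beyond radius t,
   D(.,w) grows at least linearly with slope v_g(w,t)/t. *)
lemma bregman_growth:
  assumes F: "class_F g g'" and t: "0 < t" "t \<le> norm (a - w)" and c: "ereal c \<le> mod_tc g g' w t"
  shows "c * norm (a - w) \<le> t * bregman g g' a w"
proof -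
  define s where "s = norm (a - w)"
  have s: "0 < s" "t / s \<le> 1" using t by (auto simp: s_def divide_le_eq_1)
  define u where "u = (t / s) *\<^sub>R a + (1 - t / s) *\<^sub>R w"
  have "u - w = (t / s) *\<^sub>R (a - w)" by (simp add: u_def algebra_simps)
  then have "norm (u - w) = t" using s t by (simp add: s_def)
  then have cu: "c \<le> bregman g g' u w" using c mod_tc_le_bregman order_trans ereal_less_eq(3) by metis
  have "bregman g g' u w \<le> (t / s) * bregman g g' a w + (1 - t / s) * bregman g g' w w"
    unfolding u_def by (rule bregman_convex_left[OF F]) (use s t in auto)
  then have "bregman g g' u w * s \<le> t * bregman g g' a w"
    using s by (simp add: bregman_self[OF F] field_simps)
  moreover have "c * s \<le> bregman g g' u w * s" using cu s by simp
  ultimately show ?thesis by (simp add: s_def)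
qed

lemma totally_convex_bounded_sublevel:
  assumes F: "class_F g g'" and tc: "totally_convex g g'"
  shows "bounded {y. bregman g g' y x \<le> r}"
proof -
  obtain c where c: "0 < ereal c" "ereal c < mod_tc g g' x 1"
    using tc ereal_dense2 unfolding totally_convex_def by (meson zero_less_one)
  have "norm (y - x) \<le> max 1 (r / c)" if "bregman g g' y x \<le> r" for y
  proof (cases "norm (y - x) \<le> 1")
    case False
    then have "c * norm (y - x) \<le> r"
      using bregman_growth[OF F, of 1 y x c] c that by fastforce
    then have "norm (y - x) \<le> r / c" using c by (simp add: field_simps)
    then show ?thesis by simp
  qed simp
  then have "{y. bregman g g' y x \<le> r} \<subseteq> cball x (max 1 (r / c))"
    by (auto simp: dist_norm norm_minus_commute)
  then show ?thesis using bounded_cball bounded_subset by blast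
qed

lemma H2_bregman_lower_bound:
  assumes F: "class_F g g'" and h2: "H2 g g'" and B: "bounded B" and t: "0 < t"
  obtains \<delta> where "0 < \<delta>" "\<And>w a. w \<in> B \<Longrightarrow> t \<le> norm (a - w) \<Longrightarrow> \<delta> \<le> bregman g g' a w"
proof -
  obtain \<delta> where \<delta>: "0 < ereal \<delta>" "ereal \<delta> < (INF w\<in>B. mod_tc g g' w t)"
    using h2 B t ereal_dense2 unfolding H2_def by meson
  have "\<delta> \<le> bregman g g' a w" if "w \<in> B" "t \<le> norm (a - w)" for w a
  proof -
    have "ereal \<delta> \<le> mod_tc g g' w t"
      using \<delta>(2) INF_lower[OF \<open>w \<in> B\<close>, of "\<lambda>w. mod_tc g g' w t"] by simp
    then have "\<delta> * norm (a - w) \<le> t * bregman g g' a w" by (rule bregman_growth[OF F t that(2)])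
    moreover have "\<delta> * t \<le> \<delta> * norm (a - w)" using \<delta>(1) that(2) by simp
    ultimately have "t * \<delta> \<le> t * bregman g g' a w" by (simp add: mult.commute)
    then show ?thesis using t by simp
  qed
  then show thesis using that \<delta>(1) by simp
qed

lemma bregman_minimizing_sequence_Cauchy:
  assumes F: "class_F g g'" and tc: "totally_convex g g'" and h2: "H2 g g'"
    and A: "convex A" and Y: "\<And>n. Y n \<in> A"
    and m: "\<And>y. y \<in> A \<Longrightarrow> m \<le> bregman g g' y x"
    and lim: "(\<lambda>n. bregman g g' (Y n) x) \<longlonglongrightarrow> m"
  shows "Cauchy Y"
proof (rule metric_CauchyI)
  fix e :: real
  assume e: "0 < e"
  let ?h = "\<lambda>y. bregman g g' y x"
  have "bounded {y. ?h y \<le> m + 1}" by (rule totally_convex_bounded_sublevel[OF F tc])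
  then obtain \<delta> where \<delta>: "0 < \<delta>"
    and sep: "\<And>w a. ?h w \<le> m + 1 \<Longrightarrow> e / 2 \<le> norm (a - w) \<Longrightarrow> \<delta> \<le> bregman g g' a w"
    using H2_bregman_lower_bound[OF F h2, of _ "e / 2"] e by (metis half_gt_zero mem_Collect_eq)
  have "\<forall>\<^sub>F n in sequentially. ?h (Y n) < m + min 1 (\<delta> / 2)"
    using lim \<delta> by (intro order_tendstoD(2)) auto
  then obtain N where N: "\<And>n. N \<le> n \<Longrightarrow> ?h (Y n) < m + min 1 (\<delta> / 2)"
    unfolding eventually_sequentially by blast
  (* Otherwise the midpoint of Y j and Y k would lie below the infimum m. *)
  have "dist (Y j) (Y k) < e" if "N \<le> j" "N \<le> k" for j k
  proof (rule ccontr)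
    assume far: "\<not> dist (Y j) (Y k) < e"
    define w where "w = midpoint (Y j) (Y k)"
    have w_eq: "w = (1/2) *\<^sub>R Y j + (1 - 1/2) *\<^sub>R Y k"
      by (simp add: w_def midpoint_def scaleR_right_distrib)
    have gap: "(1/2) * ?h (Y j) + (1/2) * ?h (Y k) - ?h w
        = (1/2) * bregman g g' (Y j) w + (1/2) * bregman g g' (Y k) w"
      using bregman_convex_combination_diff[OF F w_eq] by simp
    have "?h w \<le> (1/2) * ?h (Y j) + (1/2) * ?h (Y k)"
      using bregman_convex_left[OF F, of "1/2" "Y j" "Y k" x] by (simp add: w_eq)
    moreover have close: "?h (Y j) < m + min 1 (\<delta> / 2)" "?h (Y k) < m + min 1 (\<delta> / 2)"
      using N that by auto
    ultimately have "?h w \<le> m + 1" by linarith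
    moreover have "e / 2 \<le> norm (Y j - w)"
      using far dist_midpoint(1)[of "Y j" "Y k"] by (simp add: w_def dist_norm)
    ultimately have "\<delta> \<le> bregman g g' (Y j) w" by (rule sep)
    moreover have "m \<le> ?h w" unfolding w_eq by (rule m[OF convexD[OF A Y Y]]) auto
    ultimately show False
      using gap close bregman_nonneg[OF F, of "Y k" w] by linarith
  qed
  then show "\<exists>M. \<forall>j\<ge>M. \<forall>k\<ge>M. dist (Y j) (Y k) < e" by blast
qed

lemma lsc_tendsto_le:
  assumes "lsc g" "Y \<longlonglongrightarrow> l" "(\<lambda>n. g (Y n)) \<longlonglongrightarrow> L"
  shows "g l \<le> L"
proof (rule field_le_epsilon)
  fix e :: real
  assume "0 < e"
  then have "\<forall>\<^sub>F y in at l. g l - e < g y" using assms(1) unfolding lsc_def by blast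
  then have "\<forall>\<^sub>F y in nhds l. g l - e < g y"
    using \<open>0 < e\<close> unfolding eventually_at_filter by (auto elim: eventually_mono)
  from eventually_compose_filterlim[OF this assms(2)]
  have "\<forall>\<^sub>F n in sequentially. g l - e \<le> g (Y n)" by (auto elim: eventually_mono)
  then show "g l \<le> L + e" using tendsto_lowerbound[OF assms(3)] by fastforce
qed

lemma bregman_projection_exists:
  fixes A :: "'a::banach set"
  assumes F: "class_F g g'" and tc: "totally_convex g g'" and h2: "H2 g g'"
    and A: "A \<noteq> {}" "closed A" "convex A"
  shows "\<exists>z\<in>A. \<forall>y\<in>A. bregman g g' z x \<le> bregman g g' y x"
proof -
  let ?h = "\<lambda>y. bregman g g' y x"
  define m where "m = Inf (?h ` A)"
  have bdd: "bdd_below (?h ` A)" using bregman_nonneg[OF F] by (meson bdd_belowI2)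
  have m: "m \<le> ?h y" if "y \<in> A" for y unfolding m_def using bdd that by (simp add: cInf_lower)
  have "\<exists>y\<in>A. ?h y < m + inverse (real (Suc n))" for n
    using cInf_lessD[of "?h ` A" "m + inverse (real (Suc n))"] A(1) by (simp add: m_def)
  then obtain Y where Y: "\<And>n. Y n \<in> A" "\<And>n. ?h (Y n) < m + inverse (real (Suc n))" by metis
  have hY: "(\<lambda>n. ?h (Y n)) \<longlonglongrightarrow> m"
  proof (rule tendsto_sandwich[OF _ _ tendsto_const LIMSEQ_inverse_real_of_nat_add])
    show "\<forall>\<^sub>F n in sequentially. m \<le> ?h (Y n)" using m Y(1) by simp
    show "\<forall>\<^sub>F n in sequentially. ?h (Y n) \<le> m + inverse (real (Suc n))"
      using Y(2) by (simp add: less_imp_le)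
  qed
  have "Cauchy Y" by (rule bregman_minimizing_sequence_Cauchy[OF F tc h2 A(3) Y(1) m hY])
  then obtain z where z: "Y \<longlonglongrightarrow> z" using Cauchy_convergent_iff convergent_def by blast
  have "z \<in> A" using closed_sequentially[OF A(2) Y(1) z] .
  interpret L: bounded_linear "g' x" by (rule class_F_bounded_linear[OF F])
  have "(\<lambda>n. ?h (Y n) + g x + g' x (Y n - x)) \<longlonglongrightarrow> m + g x + g' x (z - x)"
    by (intro tendsto_intros L.tendsto hY z)
  then have "(\<lambda>n. g (Y n)) \<longlonglongrightarrow> m + g x + g' x (z - x)" by (simp add: bregman_def)
  then have "g z \<le> m + g x + g' x (z - x)"
    using lsc_tendsto_le[OF _ z] F by (simp add: class_F_def)
  then have "?h z \<le> m" by (simp add: bregman_def)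
  then show ?thesis using \<open>z \<in> A\<close> m by force
qed

lemma bproj_eqI:
  assumes F: "class_F g g'" and A: "convex A"
    and z: "z \<in> A" "\<And>y. y \<in> A \<Longrightarrow> bregman g g' z x \<le> bregman g g' y x"
  shows "bproj g g' A x = z"
  unfolding bproj_def
proof (rule the_equality)
  fix z'
  assume z': "z' \<in> A \<and> (\<forall>y\<in>A. bregman g g' z' x \<le> bregman g g' y x)"
  show "z' = z"
  proof (rule ccontr)
    assume "z' \<noteq> z"
    define w where "w = (1/2) *\<^sub>R z' + (1 - 1/2) *\<^sub>R z"
    have "g w < (1/2) * g z' + (1 - 1/2) * g z"
      unfolding w_def by (rule class_F_strict_convex[OF F \<open>z' \<noteq> z\<close>]) auto
    then have "bregman g g' w x < (1/2) * bregman g g' z' x + (1 - 1/2) * bregman g g' z x"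
      using bregman_convex_combination[OF F, of "1/2" z' x z] unfolding w_def by linarith
    moreover have "w \<in> A" unfolding w_def using convexD[OF A] z(1) z' by simp
    ultimately show False using z z' by fastforce
  qed
qed (use z in blast)

lemma bproj_mem:
  fixes A :: "'a::banach set"
  assumes "class_F g g'" "totally_convex g g'" "H2 g g'" "A \<noteq> {}" "closed A" "convex A"
  shows "bproj g g' A x \<in> A"
  using bregman_projection_exists[OF assms, of x] bproj_eqI[OF assms(1,6)] by metis

lemma bproj_self:
  assumes F: "class_F g g'" and "convex A" "x \<in> A"
  shows "bproj g g' A x = x"
  using bregman_nonneg[OF F] by (intro bproj_eqI[OF F assms(2,3)]) (simp add: bregman_self[OF F])

lemma tendsto_imp_weak_conv: "xs \<longlonglongrightarrow> x \<Longrightarrow> weak_conv xs x"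
  unfolding weak_conv_def by (auto intro: bounded_linear.tendsto)

lemma demiclosed_imp_closed_Fix:
  assumes "demiclosed K T"
  shows "closed (Fix K T)"
  unfolding closed_sequential_limits
proof (intro allI impI, elim conjE)
  fix xs l
  assume xs: "\<forall>n. xs n \<in> Fix K T" "xs \<longlonglongrightarrow> l"
  then have "\<forall>n. xs n \<in> K" "(\<lambda>n. infdist (xs n) (T (xs n))) \<longlonglongrightarrow> 0"
    by (simp_all add: Fix_def)
  moreover have "weak_conv xs l" using xs(2) by (rule tendsto_imp_weak_conv)
  ultimately show "l \<in> Fix K T" using assms unfolding demiclosed_def by blast
qed

lemma quasi_Dg_nonexp_convex_Fix:
  fixes K :: "'a::banach set"
  assumes F: "class_F g g'" and tc: "totally_convex g g'" and h2: "H2 g g'"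
    and K: "convex K" and T: "\<forall>x\<in>K. T x \<noteq> {} \<and> closed (T x) \<and> convex (T x)"
    and nonexp: "quasi_Dg_nonexp g g' K T"
  shows "convex (Fix K T)"
proof -
  let ?S = "\<lambda>x. bproj g g' (T x) x"
  have S_le: "bregman g g' p (?S x) \<le> bregman g g' p x" if "p \<in> Fix K T" "x \<in> K" for p x
  proof -
    have "p \<in> K" "p \<in> T p" using that(1) by (simp_all add: Fix_def)
    then have "?S p = p" using T by (simp add: bproj_self[OF F])
    then show ?thesis
      using nonexp \<open>p \<in> K\<close> \<open>x \<in> K\<close> unfolding quasi_Dg_nonexp_def Let_def by blast
  qed
  show ?thesis
  proof (rule convexI)
    fix p q :: 'a and u v :: real
    assume pq: "p \<in> Fix K T" "q \<in> Fix K T" and uv: "0 \<le> u" "0 \<le> v" "u + v = 1"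
    define z where "z = u *\<^sub>R p + v *\<^sub>R q"
    have z_eq: "z = u *\<^sub>R p + (1 - u) *\<^sub>R q" using uv(3) by (simp add: z_def eq_diff_eq')
    have "z \<in> K" unfolding z_def using pq uv by (intro convexD[OF K]) (simp_all add: Fix_def)
    have "u * bregman g g' p (?S z) + (1 - u) * bregman g g' q (?S z) - bregman g g' z (?S z)
        = u * bregman g g' p z + (1 - u) * bregman g g' q z"
      by (rule bregman_convex_combination_diff[OF F z_eq])
    moreover have "u * bregman g g' p (?S z) \<le> u * bregman g g' p z"
      using S_le[OF pq(1) \<open>z \<in> K\<close>] uv(1) by (rule mult_left_mono)
    moreover have "(1 - u) * bregman g g' q (?S z) \<le> (1 - u) * bregman g g' q z"
      using S_le[OF pq(2) \<open>z \<in> K\<close>] uv by (intro mult_left_mono) simp_all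
    ultimately have "z = ?S z" by (intro bregman_le_0_imp_eq[OF F]) linarith
    moreover have "?S z \<in> T z" using T \<open>z \<in> K\<close> by (simp add: bproj_mem[OF F tc h2])
    ultimately show "u *\<^sub>R p + v *\<^sub>R q \<in> Fix K T"
      using \<open>z \<in> K\<close> by (simp add: Fix_def flip: z_def)
  qed
qed

lemma uniformly_continuous_on_bounded_imp_isCont:
  fixes h :: "'a::metric_space \<Rightarrow> 'b::metric_space"
  assumes "\<forall>B. bounded B \<longrightarrow> uniformly_continuous_on B h"
  shows "isCont h x"
proof -
  have "continuous_on (ball x 1) h"
    using assms bounded_ball uniformly_continuous_imp_continuous by blast
  then show ?thesis using continuous_on_eq_continuous_at[OF open_ball, of x 1 h] by simp
qed

lemma closed_dual_equilibria:
  fixes K :: "'a::t2_space set" and f :: "'a \<Rightarrow> 'a \<Rightarrow> 'b::real_normed_vector"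
  assumes "closed K" "closed C" "\<And>y x. isCont (f y) x"
  shows "closed {x \<in> K. \<forall>y\<in>K. f y x \<in> uminus ` C}"
proof -
  have "{x \<in> K. \<forall>y\<in>K. f y x \<in> uminus ` C} = K \<inter> (\<Inter>y\<in>K. f y -` uminus ` C)" by auto
  moreover have "closed (f y -` uminus ` C)" for y
    by (rule continuous_closed_vimage[OF closed_negations[OF assms(2)] assms(3)])
  ultimately show ?thesis using assms(1) by (simp add: closed_Int closed_INT)
qed

lemma convex_dual_equilibria:
  fixes K :: "'a::real_vector set" and f :: "'a \<Rightarrow> 'a \<Rightarrow> 'b::real_vector"
  assumes "convex K" "convex C" "cone C" "\<And>y. C_convex C (f y)"
  shows "convex {x \<in> K. \<forall>y\<in>K. f y x \<in> uminus ` C}"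
proof (rule convexI)
  fix p q :: 'a and u v :: real
  assume p: "p \<in> {x \<in> K. \<forall>y\<in>K. f y x \<in> uminus ` C}" and q: "q \<in> {x \<in> K. \<forall>y\<in>K. f y x \<in> uminus ` C}"
    and uv: "0 \<le> u" "0 \<le> v" "u + v = 1"
  have v: "v = 1 - u" using uv(3) by simp
  have add_C: "\<forall>a\<in>C. \<forall>b\<in>C. a + b \<in> C" using convex_cone[of C] assms(2,3) by simp
  have "f y (u *\<^sub>R p + v *\<^sub>R q) \<in> uminus ` C" if "y \<in> K" for y
  proof -
    obtain cp cq where cpq: "cp \<in> C" "cq \<in> C" "f y p = - cp" "f y q = - cq"
      using p q \<open>y \<in> K\<close> by blast
    have "u *\<^sub>R cp + v *\<^sub>R cq \<in> C" by (rule convexD[OF assms(2) cpq(1,2) uv])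
    moreover have "(u *\<^sub>R f y p + v *\<^sub>R f y q) - f y (u *\<^sub>R p + v *\<^sub>R q) \<in> C"
      using assms(4)[of y] uv unfolding C_convex_def v by simp
    ultimately have "(u *\<^sub>R cp + v *\<^sub>R cq) + ((u *\<^sub>R f y p + v *\<^sub>R f y q) - f y (u *\<^sub>R p + v *\<^sub>R q)) \<in> C"
      using add_C by blast
    moreover have "(u *\<^sub>R cp + v *\<^sub>R cq) + ((u *\<^sub>R f y p + v *\<^sub>R f y q) - f y (u *\<^sub>R p + v *\<^sub>R q))
        = - f y (u *\<^sub>R p + v *\<^sub>R q)"
      by (simp add: cpq(3,4))
    ultimately show ?thesis by (metis image_eqI minus_minus)
  qed
  moreover have "u *\<^sub>R p + v *\<^sub>R q \<in> K" using p q uv by (intro convexD[OF assms(1)]) simp_all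
  ultimately show "u *\<^sub>R p + v *\<^sub>R q \<in> {x \<in> K. \<forall>y\<in>K. f y x \<in> uminus ` C}" by blast
qed

theorem corollary2p18:
  fixes K :: "'a::banach set"
    and g :: "'a \<Rightarrow> real" and g' :: "'a \<Rightarrow> 'a \<Rightarrow> real"
    and C :: "'b::banach set"
    and f :: "'a \<Rightarrow> 'a \<Rightarrow> 'b"
    and T :: "'a \<Rightarrow> 'a set"
  assumes K: "K \<noteq> {}" "closed K" "convex K"
    and g: "class_F g g'" "totally_convex g g'" "H1 g g'" "H2 g g'"
    and C: "closed C" "convex C" "cone C" "C \<inter> uminus ` C = {0}" "interior C \<noteq> {}"
    and T_maps: "\<forall>x\<in>K. T x \<subseteq> K"
    and B1: "\<forall>x. f x x = 0"
    and B2: "\<forall>B. bounded B \<longrightarrow> uniformly_continuous_on B (\<lambda>(x, y). f x y)"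
    and B3: "\<forall>x. C_convex C (f x)"
    and B4: "\<forall>x\<in>K. T x \<noteq> {} \<and> closed (T x) \<and> convex (T x)"
            "demiclosed K T" "\<forall>x\<in>K. lsc_map_at K T x" "quasi_Dg_nonexp g g' K T"
  shows "closed (DS K C f T) \<and> convex (DS K C f T)"
proof -
  have DS_eq: "DS K C f T = Fix K T \<inter> {x \<in> K. \<forall>y\<in>K. f y x \<in> uminus ` C}"
    by (auto simp: DS_def Fix_def)
  have f_cont: "isCont (f y) x" for y x
  proof -
    have joint: "isCont (\<lambda>(a, b). f a b) (y, x)"
      using B2 by (rule uniformly_continuous_on_bounded_imp_isCont)
    have "isCont (\<lambda>b. (\<lambda>(a, b). f a b) (y, b)) x"
      using isCont_o2[where f = "\<lambda>b. (y, b)" and a = x, OF _ joint] by (simp add: continuous_intros)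
    then show ?thesis by simp
  qed
  have "closed (Fix K T)" by (rule demiclosed_imp_closed_Fix[OF B4(2)])
  moreover have "convex (Fix K T)" by (rule quasi_Dg_nonexp_convex_Fix[OF g(1,2,4) K(3) B4(1,4)])
  moreover have "closed {x \<in> K. \<forall>y\<in>K. f y x \<in> uminus ` C}"
    by (rule closed_dual_equilibria[OF K(2) C(1) f_cont])
  moreover have "convex {x \<in> K. \<forall>y\<in>K. f y x \<in> uminus ` C}"
    using B3 by (intro convex_dual_equilibria[OF K(3) C(2,3)]) simp
  ultimately show ?thesis by (simp add: DS_eq closed_Int convex_Int)
qed

end
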